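(* Let $G$ be a graph on $n$ vertices with $\alpha(G)=2$. Then $\xi_f(G)\ge \frac{n}{2}$.
   Context: $\alpha(G)$ is the independence number. For positive integers $d,r$, a $d/r$-representation of a graph $G=(V,E)$ is a collection $\{P_v\}_{v\in V}$ of $d\times d$ orthogonal projectors, each of rank $r$, such that $P_vP_w=0$ for every edge $vw\in E$. The projective rank is $\xi_f(G)=\inf\{d/r : G \text{ has a } d/r\text{-representation}\}$. *)

theory Defs
  imports "Jordan_Normal_Form.DL_Rank" "Jordan_Normal_Form.Schur_Decomposition" Complex_Main
begin

definition simple_graph :: "'a set \<Rightarrow> ('a \<Rightarrow> 'a \<Rightarrow> bool) \<Rightarrow> bool" where
  "simple_graph V E \<longleftrightarrow> finite V \<and> (\<forall>v w. E v w \<longrightarrow> v \<in> V \<and> w \<in> V)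
     \<and> (\<forall>v w. E v w \<longrightarrow> E w v) \<and> (\<forall>v. \<not> E v v)"

definition independent_set :: "'a set \<Rightarrow> ('a \<Rightarrow> 'a \<Rightarrow> bool) \<Rightarrow> 'a set \<Rightarrow> bool" where
  "independent_set V E S \<longleftrightarrow> S \<subseteq> V \<and> (\<forall>v\<in>S. \<forall>w\<in>S. \<not> E v w)"

definition independence_number :: "'a set \<Rightarrow> ('a \<Rightarrow> 'a \<Rightarrow> bool) \<Rightarrow> nat" where
  "independence_number V E = Max {card S | S. independent_set V E S}"

definition orth_projector :: "nat \<Rightarrow> complex mat \<Rightarrow> bool" where
  "orth_projector d P \<longleftrightarrow> P \<in> carrier_mat d d \<and> P * P = P \<and> mat_adjoint P = P"

definition dr_representation ::
  "'a set \<Rightarrow> ('a \<Rightarrow> 'a \<Rightarrow> bool) \<Rightarrow> nat \<Rightarrow> nat \<Rightarrow> ('a \<Rightarrow> complex mat) \<Rightarrow> bool" where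
  "dr_representation V E d r P \<longleftrightarrow>
     (\<forall>v\<in>V. orth_projector d (P v) \<and> vec_space.rank d (P v) = r)
     \<and> (\<forall>v w. E v w \<longrightarrow> P v * P w = 0\<^sub>m d d)"

definition projective_rank :: "'a set \<Rightarrow> ('a \<Rightarrow> 'a \<Rightarrow> bool) \<Rightarrow> real" where
  "projective_rank V E = Inf {real d / real r | d r. d > 0 \<and> r > 0 \<and>
      (\<exists>P. dr_representation V E d r P)}"

end

theory Submission
  imports Defs "Jordan_Normal_Form.DL_Rank_Submatrix"
begin

text \<open>
  Let \<open>(P\<^sub>v)\<close> be a \<open>d/r\<close>-representation and \<open>S = \<Sum>\<^sub>v P\<^sub>v\<close>. The rank of an orthogonal
  projector is at most its trace, so \<open>n r \<le> tr S\<close>. Since \<open>\<alpha>(G) = 2\<close>, the non-neighbours of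
  a vertex \<open>u\<close> form a clique; their projectors are pairwise orthogonal and sum to a projector
  \<open>Q\<^sub>u\<close>, whence \<open>tr (P\<^sub>u S) = tr P\<^sub>u + tr (P\<^sub>u Q\<^sub>u) \<le> 2 tr P\<^sub>u\<close> and \<open>tr (S\<^sup>2) \<le> 2 tr S\<close>.
  Cauchy-Schwarz on the diagonal of the Hermitian matrix \<open>S\<close> gives
  \<open>(tr S)\<^sup>2 \<le> d tr (S\<^sup>2) \<le> 2 d tr S\<close>, hence \<open>n r \<le> tr S \<le> 2 d\<close>.
\<close>

section \<open>Traces, adjoints and sums of matrices\<close>

definition trace :: "'a::comm_monoid_add mat \<Rightarrow> 'a" where
  "trace A = (\<Sum>i<dim_row A. A $$ (i, i))"

text \<open>The library's \<open>0 :: 'a mat\<close> is the \<open>0 \<times> 0\<close> matrix, so sums of \<open>d \<times> d\<close> matrices are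
  formed entrywise rather than with \<^const>\<open>sum\<close>.\<close>

definition mat_sum :: "nat \<Rightarrow> 'b set \<Rightarrow> ('b \<Rightarrow> 'a::comm_monoid_add mat) \<Rightarrow> 'a mat" where
  "mat_sum d C P = mat d d (\<lambda>(a, b). \<Sum>v\<in>C. P v $$ (a, b))"

lemma index_mult_mat_sum:
  "A \<in> carrier_mat n m \<Longrightarrow> B \<in> carrier_mat m k \<Longrightarrow> i < n \<Longrightarrow> j < k \<Longrightarrow>
    (A * B) $$ (i, j) = (\<Sum>l<m. A $$ (i, l) * B $$ (l, j))"
  by (simp add: scalar_prod_def atLeast0LessThan)

lemma mat_adjoint_dim [simp]:
  "dim_row (mat_adjoint A) = dim_col A" "dim_col (mat_adjoint A) = dim_row A"
  unfolding mat_adjoint_def by auto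

lemma mat_adjoint_carrier [simp]:
  "A \<in> carrier_mat n m \<Longrightarrow> mat_adjoint A \<in> carrier_mat m n"
  by auto

lemma mat_adjoint_index [simp]:
  "i < dim_col A \<Longrightarrow> j < dim_row A \<Longrightarrow> mat_adjoint A $$ (i, j) = conjugate (A $$ (j, i))"
  unfolding mat_adjoint_def by (simp add: mat_of_rows_index)

lemma mat_adjoint_mult:
  fixes A :: "'a::conjugatable_field mat"
  assumes A: "A \<in> carrier_mat n m" and B: "B \<in> carrier_mat m k"
  shows "mat_adjoint (A * B) = mat_adjoint B * mat_adjoint A"
proof (rule eq_matI)
  fix i j
  assume "i < dim_row (mat_adjoint B * mat_adjoint A)" "j < dim_col (mat_adjoint B * mat_adjoint A)"
  then show "mat_adjoint (A * B) $$ (i, j) = (mat_adjoint B * mat_adjoint A) $$ (i, j)"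
    using A B by (simp add: index_mult_mat_sum[of _ k m _ n] index_mult_mat_sum[OF A B] sum_conjugate
        conjugate_dist_mul mult.commute del: index_mult_mat(1))
qed (use A B in auto)

lemma mat_adjoint_minus:
  fixes A :: "'a::conjugatable_field mat"
  assumes "A \<in> carrier_mat n m" and "B \<in> carrier_mat n m"
  shows "mat_adjoint (A - B) = mat_adjoint A - mat_adjoint B"
proof -
  have "conjugate (a - b) = conjugate a - conjugate b" for a b :: 'a
    by (metis diff_conv_add_uminus conjugate_dist_add conjugate_neg)
  then show ?thesis
    by (intro eq_matI) (use assms in auto)
qed

lemma trace_mult_comm:
  fixes A :: "'a::comm_semiring_0 mat"
  assumes A: "A \<in> carrier_mat n m" and B: "B \<in> carrier_mat m n"
  shows "trace (A * B) = trace (B * A)"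
proof -
  have "trace (A * B) = (\<Sum>i<n. \<Sum>l<m. A $$ (i, l) * B $$ (l, i))"
    unfolding trace_def using A B
    by (intro sum.cong) (auto simp: index_mult_mat_sum[OF A B] simp del: index_mult_mat(1))
  also have "\<dots> = (\<Sum>l<m. \<Sum>i<n. B $$ (l, i) * A $$ (i, l))"
    by (subst sum.swap) (simp add: mult.commute)
  also have "\<dots> = trace (B * A)"
    unfolding trace_def using A B
    by (intro sum.cong) (auto simp: index_mult_mat_sum[OF B A] simp del: index_mult_mat(1))
  finally show ?thesis .
qed

lemma trace_minus:
  fixes A :: "'a::ab_group_add mat"
  assumes "A \<in> carrier_mat n n" and "B \<in> carrier_mat n n"
  shows "trace (A - B) = trace A - trace B"
  using assms unfolding trace_def by (simp add: sum_subtractf)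

lemma trace_adjoint_mult_self:
  fixes A :: "complex mat"
  assumes A: "A \<in> carrier_mat n m"
  shows "trace (mat_adjoint A * A) = of_real (\<Sum>j<m. \<Sum>i<n. (cmod (A $$ (i, j)))\<^sup>2)"
proof -
  have "trace (mat_adjoint A * A) = (\<Sum>j<m. \<Sum>i<n. A $$ (i, j) * cnj (A $$ (i, j)))"
    unfolding trace_def using A
    by (intro sum.cong) (auto simp: index_mult_mat_sum[OF mat_adjoint_carrier[OF A] A] mult.commute
        simp del: index_mult_mat(1))
  also have "\<dots> = of_real (\<Sum>j<m. \<Sum>i<n. (cmod (A $$ (i, j)))\<^sup>2)"
    by (simp only: of_real_sum complex_norm_square)
  finally show ?thesis .
qed

lemma mat_sum_dim [simp]: "dim_row (mat_sum d C P) = d" "dim_col (mat_sum d C P) = d"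
  unfolding mat_sum_def by simp_all

lemma mat_sum_carrier [simp]: "mat_sum d C P \<in> carrier_mat d d"
  by auto

lemma mat_sum_index [simp]:
  "a < d \<Longrightarrow> b < d \<Longrightarrow> mat_sum d C P $$ (a, b) = (\<Sum>v\<in>C. P v $$ (a, b))"
  unfolding mat_sum_def by simp

lemma mat_sum_cong:
  "(\<And>v. v \<in> C \<Longrightarrow> P v = Q v) \<Longrightarrow> mat_sum d C P = mat_sum d C Q"
  unfolding mat_sum_def by (metis (mono_tags, lifting) sum.cong)

lemma mult_mat_sum_right:
  assumes "A \<in> carrier_mat d d" and "\<And>v. v \<in> C \<Longrightarrow> P v \<in> carrier_mat d d"
  shows "A * mat_sum d C P = mat_sum d C (\<lambda>v. A * P v)"
proof (rule eq_matI)
  fix a b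
  assume "a < dim_row (mat_sum d C (\<lambda>v. A * P v))" "b < dim_col (mat_sum d C (\<lambda>v. A * P v))"
  then have ab: "a < d" "b < d"
    by simp_all
  have "(A * mat_sum d C P) $$ (a, b) = (\<Sum>k<d. \<Sum>v\<in>C. A $$ (a, k) * P v $$ (k, b))"
    using assms ab
    by (simp add: index_mult_mat_sum[of _ d d _ d] sum_distrib_left del: index_mult_mat(1))
  also have "\<dots> = (\<Sum>v\<in>C. (A * P v) $$ (a, b))"
    using assms ab by (subst sum.swap)
      (auto simp: index_mult_mat_sum[of _ d d _ d] simp del: index_mult_mat(1) intro!: sum.cong)
  finally show "(A * mat_sum d C P) $$ (a, b) = mat_sum d C (\<lambda>v. A * P v) $$ (a, b)"
    using ab by simp
qed (use assms in auto)

lemma mult_mat_sum_left: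
  assumes "A \<in> carrier_mat d d" and "\<And>v. v \<in> C \<Longrightarrow> P v \<in> carrier_mat d d"
  shows "mat_sum d C P * A = mat_sum d C (\<lambda>v. P v * A)"
proof (rule eq_matI)
  fix a b
  assume "a < dim_row (mat_sum d C (\<lambda>v. P v * A))" "b < dim_col (mat_sum d C (\<lambda>v. P v * A))"
  then have ab: "a < d" "b < d"
    by simp_all
  have "(mat_sum d C P * A) $$ (a, b) = (\<Sum>k<d. \<Sum>v\<in>C. P v $$ (a, k) * A $$ (k, b))"
    using assms ab
    by (simp add: index_mult_mat_sum[of _ d d _ d] sum_distrib_right del: index_mult_mat(1))
  also have "\<dots> = (\<Sum>v\<in>C. (P v * A) $$ (a, b))"
    using assms ab by (subst sum.swap)
      (auto simp: index_mult_mat_sum[of _ d d _ d] simp del: index_mult_mat(1) intro!: sum.cong)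
  finally show "(mat_sum d C P * A) $$ (a, b) = mat_sum d C (\<lambda>v. P v * A) $$ (a, b)"
    using ab by simp
qed (use assms in auto)

lemma mat_adjoint_mat_sum:
  fixes P :: "'b \<Rightarrow> 'a::conjugatable_field mat"
  assumes "finite C" and "\<And>v. v \<in> C \<Longrightarrow> P v \<in> carrier_mat d d"
  shows "mat_adjoint (mat_sum d C P) = mat_sum d C (\<lambda>v. mat_adjoint (P v))"
proof -
  have "dim_row (P v) = d" "dim_col (P v) = d" if "v \<in> C" for v
    using assms(2)[OF that] by auto
  then show ?thesis
    by (intro eq_matI) (auto simp: sum_conjugate[OF assms(1)] intro!: sum.cong)
qed

lemma trace_mat_sum:
  assumes "\<And>v. v \<in> C \<Longrightarrow> P v \<in> carrier_mat d d"
  shows "trace (mat_sum d C P) = (\<Sum>v\<in>C. trace (P v))"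
proof -
  have "(\<Sum>v\<in>C. trace (P v)) = (\<Sum>v\<in>C. \<Sum>i<d. P v $$ (i, i))"
    using assms unfolding trace_def by (intro sum.cong) auto
  then show ?thesis
    unfolding trace_def by (simp add: sum.swap[of _ C])
qed

lemma trace_mult_mat_sum:
  assumes "A \<in> carrier_mat d d" and "\<And>v. v \<in> C \<Longrightarrow> P v \<in> carrier_mat d d"
  shows "trace (A * mat_sum d C P) = (\<Sum>v\<in>C. trace (A * P v))"
  using assms by (simp add: mult_mat_sum_right trace_mat_sum)

lemma square_sum_le_card_sum_squares:
  fixes x :: "'a \<Rightarrow> real"
  shows "(\<Sum>a\<in>A. x a)\<^sup>2 \<le> real (card A) * (\<Sum>a\<in>A. (x a)\<^sup>2)"
proof -
  have "0 \<le> (\<Sum>a\<in>A. \<Sum>b\<in>A. (x a - x b)\<^sup>2)"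
    by (intro sum_nonneg) simp
  also have "\<dots> = 2 * (real (card A) * (\<Sum>a\<in>A. (x a)\<^sup>2)) - 2 * (\<Sum>a\<in>A. x a)\<^sup>2"
    by (simp add: power2_diff sum_subtractf sum.distrib sum_distrib_left power2_eq_square
        sum_product algebra_simps)
  finally show ?thesis
    by simp
qed

lemma hermitian_trace_squared_le:
  fixes S :: "complex mat"
  assumes S: "S \<in> carrier_mat d d" and herm: "mat_adjoint S = S"
  shows "(Re (trace S))\<^sup>2 \<le> real d * Re (trace (S * S))"
proof -
  have "Re (trace S) = (\<Sum>j<d. Re (S $$ (j, j)))"
    using S by (simp add: trace_def Re_sum)
  moreover have "(\<Sum>j<d. Re (S $$ (j, j)))\<^sup>2 \<le> real d * (\<Sum>j<d. (Re (S $$ (j, j)))\<^sup>2)"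
    using square_sum_le_card_sum_squares[of "\<lambda>j. Re (S $$ (j, j))" "{..<d}"]
    by (simp only: card_lessThan)
  ultimately have "(Re (trace S))\<^sup>2 \<le> real d * (\<Sum>j<d. (Re (S $$ (j, j)))\<^sup>2)"
    by (simp only:)
  also have "(\<Sum>j<d. (Re (S $$ (j, j)))\<^sup>2) \<le> (\<Sum>j<d. \<Sum>i<d. (cmod (S $$ (i, j)))\<^sup>2)"
  proof (rule sum_mono)
    fix j
    assume j: "j \<in> {..<d}"
    have "(Re (S $$ (j, j)))\<^sup>2 \<le> (cmod (S $$ (j, j)))\<^sup>2"
      using power_mono[OF abs_Re_le_cmod abs_ge_zero, of "S $$ (j, j)" 2] by simp
    also have "\<dots> \<le> (\<Sum>i<d. (cmod (S $$ (i, j)))\<^sup>2)"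
      using j by (intro member_le_sum) auto
    finally show "(Re (S $$ (j, j)))\<^sup>2 \<le> (\<Sum>i<d. (cmod (S $$ (i, j)))\<^sup>2)" .
  qed
  also have "(\<Sum>j<d. \<Sum>i<d. (cmod (S $$ (i, j)))\<^sup>2) = Re (trace (S * S))"
    using trace_adjoint_mult_self[OF S] herm by simp
  finally show ?thesis
    by (simp add: mult_left_mono)
qed

section \<open>Orthogonal projectors\<close>

lemma orth_projector_carrier: "orth_projector d P \<Longrightarrow> P \<in> carrier_mat d d"
  unfolding orth_projector_def by simp

lemma orth_projector_mult_swap:
  assumes "orth_projector d P" and "orth_projector d Q"
  shows "Q * P = mat_adjoint (P * Q)"
  using assms mat_adjoint_mult[of P d d Q d] unfolding orth_projector_def by simp

lemma orth_projector_one: "orth_projector d (1\<^sub>m d)"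
  unfolding orth_projector_def by (auto intro!: eq_matI)

lemma orth_projector_diff:
  assumes P: "orth_projector d P" and Q: "orth_projector d Q" and PQ: "P * Q = Q"
  shows "orth_projector d (P - Q)"
proof -
  have Pc: "P \<in> carrier_mat d d" and Qc: "Q \<in> carrier_mat d d"
    using P Q by (simp_all add: orth_projector_carrier)
  have QP: "Q * P = Q"
    using orth_projector_mult_swap[OF P Q] PQ Q unfolding orth_projector_def by simp
  have "(P - Q) * (P - Q) = (P * P - P * Q) - (Q * P - Q * Q)"
    unfolding minus_mult_distrib_mat[OF Pc Qc minus_carrier_mat[OF Qc]]
      mult_minus_distrib_mat[OF Pc Pc Qc] mult_minus_distrib_mat[OF Qc Pc Qc] ..
  also have "\<dots> = P - Q"
    using P Q PQ QP Pc Qc unfolding orth_projector_def by (intro eq_matI) auto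
  finally show ?thesis
    using P Q Pc Qc unfolding orth_projector_def by (simp add: minus_carrier_mat mat_adjoint_minus)
qed

lemma mat_adjoint_mat_sum_orth_projector:
  assumes fin: "finite C" and P: "\<And>v. v \<in> C \<Longrightarrow> orth_projector d (P v)"
  shows "mat_adjoint (mat_sum d C P) = mat_sum d C P"
proof -
  have "mat_adjoint (mat_sum d C P) = mat_sum d C (\<lambda>v. mat_adjoint (P v))"
    using P by (intro mat_adjoint_mat_sum[OF fin] orth_projector_carrier)
  also have "\<dots> = mat_sum d C P"
    by (rule mat_sum_cong) (use P in \<open>simp add: orth_projector_def\<close>)
  finally show ?thesis .
qed

lemma orth_projector_mat_sum:
  assumes fin: "finite C" and P: "\<And>v. v \<in> C \<Longrightarrow> orth_projector d (P v)"
    and orth: "\<And>v w. v \<in> C \<Longrightarrow> w \<in> C \<Longrightarrow> v \<noteq> w \<Longrightarrow> P v * P w = 0\<^sub>m d d"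
  shows "orth_projector d (mat_sum d C P)"
proof -
  have Pc: "\<And>v. v \<in> C \<Longrightarrow> P v \<in> carrier_mat d d"
    using P by (simp add: orth_projector_carrier)
  have absorb: "mat_sum d C P * P u = P u" if u: "u \<in> C" for u
  proof -
    have "mat_sum d C P * P u = mat_sum d C (\<lambda>v. P v * P u)"
      by (rule mult_mat_sum_left[OF Pc[OF u] Pc])
    also have "\<dots> = P u"
    proof (rule eq_matI)
      fix a b
      assume "a < dim_row (P u)" "b < dim_col (P u)"
      then have ab: "a < d" "b < d"
        using Pc[OF u] by simp_all
      have "(\<Sum>v\<in>C. (P v * P u) $$ (a, b)) = (\<Sum>v\<in>C. if v = u then P u $$ (a, b) else 0)"
        using P[OF u] orth[OF _ u] ab unfolding orth_projector_def by (intro sum.cong) auto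
      then show "mat_sum d C (\<lambda>v. P v * P u) $$ (a, b) = P u $$ (a, b)"
        using ab fin u by simp
    qed (use Pc[OF u] in auto)
    finally show ?thesis .
  qed
  have "mat_sum d C P * mat_sum d C P = mat_sum d C (\<lambda>v. mat_sum d C P * P v)"
    by (rule mult_mat_sum_right) (use Pc in auto)
  also have "\<dots> = mat_sum d C P"
    by (rule mat_sum_cong) (rule absorb)
  finally show ?thesis
    using mat_adjoint_mat_sum_orth_projector[OF fin P] unfolding orth_projector_def by simp
qed

lemma trace_mult_orth_projector_nonneg:
  assumes P: "orth_projector d P" and Q: "orth_projector d Q"
  shows "0 \<le> Re (trace (P * Q))"
proof -
  have Pc: "P \<in> carrier_mat d d" and Qc: "Q \<in> carrier_mat d d"
    using P Q by (simp_all add: orth_projector_carrier)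
  have "trace (P * Q) = trace ((P * P) * (Q * Q))"
    using P Q unfolding orth_projector_def by simp
  also have "\<dots> = trace ((P * (P * Q)) * Q)"
    using Pc Qc by (simp add: assoc_mult_mat[of _ d d _ d _ d])
  also have "\<dots> = trace (Q * (P * (P * Q)))"
    using Pc Qc by (intro trace_mult_comm) auto
  also have "\<dots> = trace ((Q * P) * (P * Q))"
    using Pc Qc by (simp add: assoc_mult_mat[of Q d d P d "P * Q" d])
  also have "\<dots> = trace (mat_adjoint (P * Q) * (P * Q))"
    by (simp add: orth_projector_mult_swap[OF P Q])
  also have "\<dots> = of_real (\<Sum>j<d. \<Sum>i<d. (cmod ((P * Q) $$ (i, j)))\<^sup>2)"
    using Pc Qc by (intro trace_adjoint_mult_self) auto
  finally show ?thesis
    by (simp add: sum_nonneg)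
qed

lemma trace_orth_projector_nonneg: "orth_projector d P \<Longrightarrow> 0 \<le> Re (trace P)"
  using trace_mult_orth_projector_nonneg[of d P P] unfolding orth_projector_def by simp

lemma trace_mult_orth_projector_le:
  assumes P: "orth_projector d P" and Q: "orth_projector d Q"
  shows "Re (trace (P * Q)) \<le> Re (trace P)"
proof -
  have Pc: "P \<in> carrier_mat d d" and Qc: "Q \<in> carrier_mat d d"
    using P Q by (simp_all add: orth_projector_carrier)
  have "orth_projector d (1\<^sub>m d - Q)"
    using Qc by (intro orth_projector_diff[OF orth_projector_one Q]) auto
  then have "0 \<le> Re (trace (P * (1\<^sub>m d - Q)))"
    by (rule trace_mult_orth_projector_nonneg[OF P])
  also have "trace (P * (1\<^sub>m d - Q)) = trace P - trace (P * Q)"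
    using Pc Qc by (simp add: mult_minus_distrib_mat[OF Pc one_carrier_mat Qc] trace_minus[of _ d])
  finally show ?thesis
    by simp
qed

section \<open>The rank of an orthogonal projector is at most its trace\<close>

definition proj_onto :: "complex vec \<Rightarrow> complex mat" where
  "proj_onto u = mat (dim_vec u) (dim_vec u) (\<lambda>(a, b). u $ a * cnj (u $ b) / (u \<bullet>c u))"

lemma cscalar_prod_sum:
  "u \<in> carrier_vec d \<Longrightarrow> v \<in> carrier_vec d \<Longrightarrow> u \<bullet>c v = (\<Sum>k<d. u $ k * cnj (v $ k))"
  by (simp add: scalar_prod_def atLeast0LessThan)

lemma cnj_cscalar_prod_self: "u \<in> carrier_vec d \<Longrightarrow> cnj (u \<bullet>c u) = u \<bullet>c u"
  by (simp add: cscalar_prod_sum mult.commute)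

lemma proj_onto_dim [simp]:
  "dim_row (proj_onto u) = dim_vec u" "dim_col (proj_onto u) = dim_vec u"
  unfolding proj_onto_def by simp_all

lemma proj_onto_carrier [simp]: "u \<in> carrier_vec d \<Longrightarrow> proj_onto u \<in> carrier_mat d d"
  unfolding proj_onto_def by simp

lemma proj_onto_index:
  "u \<in> carrier_vec d \<Longrightarrow> a < d \<Longrightarrow> b < d \<Longrightarrow>
    proj_onto u $$ (a, b) = u $ a * cnj (u $ b) / (u \<bullet>c u)"
  unfolding proj_onto_def by simp

lemma proj_onto_mult_index:
  assumes u: "u \<in> carrier_vec d" and v: "v \<in> carrier_vec d" and ab: "a < d" "b < d"
  shows "(proj_onto u * proj_onto v) $$ (a, b) =
    u $ a * cnj (v $ b) / ((u \<bullet>c u) * (v \<bullet>c v)) * (v \<bullet>c u)"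
proof -
  have "(proj_onto u * proj_onto v) $$ (a, b) =
      (\<Sum>k<d. u $ a * cnj (v $ b) / ((u \<bullet>c u) * (v \<bullet>c v)) * (v $ k * cnj (u $ k)))"
    using u v ab by (auto simp: index_mult_mat_sum[of _ d d _ d] proj_onto_index
        simp del: index_mult_mat(1) intro!: sum.cong)
  also have "\<dots> = u $ a * cnj (v $ b) / ((u \<bullet>c u) * (v \<bullet>c v)) * (v \<bullet>c u)"
    by (simp only: cscalar_prod_sum[OF v u] sum_distrib_left)
  finally show ?thesis .
qed

lemma orth_projector_proj_onto:
  assumes u: "u \<in> carrier_vec d" and nz: "u \<noteq> 0\<^sub>v d"
  shows "orth_projector d (proj_onto u)"
proof -
  have uu: "u \<bullet>c u \<noteq> 0"
    using u nz by simp
  have "proj_onto u * proj_onto u = proj_onto u"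
    using u uu by (intro eq_matI)
      (auto simp: proj_onto_mult_index proj_onto_index simp del: index_mult_mat(1))
  moreover have "mat_adjoint (proj_onto u) = proj_onto u"
    using u cnj_cscalar_prod_self[OF u]
    by (intro eq_matI) (auto simp: proj_onto_index mult.commute)
  ultimately show ?thesis
    using u unfolding orth_projector_def by simp
qed

lemma proj_onto_mult_orthogonal:
  "u \<in> carrier_vec d \<Longrightarrow> v \<in> carrier_vec d \<Longrightarrow> v \<bullet>c u = 0 \<Longrightarrow>
    proj_onto u * proj_onto v = 0\<^sub>m d d"
  by (intro eq_matI) (auto simp: proj_onto_mult_index simp del: index_mult_mat(1))

lemma mult_proj_onto_fixed:
  assumes P: "P \<in> carrier_mat d d" and u: "u \<in> carrier_vec d" and fixed: "P *\<^sub>v u = u"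
  shows "P * proj_onto u = proj_onto u"
proof (rule eq_matI)
  fix a b
  assume "a < dim_row (proj_onto u)" "b < dim_col (proj_onto u)"
  then have ab: "a < d" "b < d"
    using u by simp_all
  have "(P * proj_onto u) $$ (a, b) = (\<Sum>k<d. P $$ (a, k) * u $ k) * cnj (u $ b) / (u \<bullet>c u)"
    using P u ab by (simp add: index_mult_mat_sum[of _ d d _ d] proj_onto_index sum_distrib_right
        sum_divide_distrib mult.assoc del: index_mult_mat(1))
  also have "(\<Sum>k<d. P $$ (a, k) * u $ k) = (P *\<^sub>v u) $ a"
    using P u ab by (simp add: scalar_prod_def atLeast0LessThan)
  also have "\<dots> = u $ a"
    by (simp add: fixed)
  finally show "(P * proj_onto u) $$ (a, b) = proj_onto u $$ (a, b)"
    using u ab by (simp add: proj_onto_index)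
qed (use P u in auto)

lemma trace_proj_onto:
  assumes u: "u \<in> carrier_vec d" and nz: "u \<noteq> 0\<^sub>v d"
  shows "trace (proj_onto u) = 1"
proof -
  have "trace (proj_onto u) = (\<Sum>a<d. u $ a * cnj (u $ a)) / (u \<bullet>c u)"
    using u by (simp add: trace_def proj_onto_index sum_divide_distrib)
  also have "\<dots> = 1"
    using u nz by (simp add: cscalar_prod_sum[symmetric])
  finally show ?thesis .
qed

lemma length_corthogonal_fixed_le_trace:
  assumes P: "orth_projector d P" and us: "set us \<subseteq> carrier_vec d" "corthogonal us"
    and fixed: "\<And>u. u \<in> set us \<Longrightarrow> P *\<^sub>v u = u"
  shows "real (length us) \<le> Re (trace P)"
proof -
  define Q where "Q = mat_sum d {..<length us} (\<lambda>i. proj_onto (us ! i))"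
  have Pc: "P \<in> carrier_mat d d"
    using P by (rule orth_projector_carrier)
  have u: "us ! i \<in> carrier_vec d" if "i < length us" for i
    using us(1) that by auto
  have nz: "us ! i \<noteq> 0\<^sub>v d" if "i < length us" for i
    using corthogonalD[OF us(2) that that] by auto
  have Q: "orth_projector d Q"
    unfolding Q_def
  proof (rule orth_projector_mat_sum)
    show "orth_projector d (proj_onto (us ! i))" if "i \<in> {..<length us}" for i
      using that u nz by (intro orth_projector_proj_onto) auto
    show "proj_onto (us ! i) * proj_onto (us ! j) = 0\<^sub>m d d"
      if "i \<in> {..<length us}" "j \<in> {..<length us}" "i \<noteq> j" for i j
      using that u corthogonalD[OF us(2), of j i] by (intro proj_onto_mult_orthogonal) auto
  qed simp
  have "P * Q = mat_sum d {..<length us} (\<lambda>i. P * proj_onto (us ! i))"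
    unfolding Q_def by (rule mult_mat_sum_right[OF Pc]) (use u in auto)
  also have "\<dots> = Q"
    unfolding Q_def using Pc u fixed by (intro mat_sum_cong mult_proj_onto_fixed) auto
  finally have "0 \<le> Re (trace (P - Q))"
    by (intro trace_orth_projector_nonneg[of d] orth_projector_diff[OF P Q])
  moreover have "trace Q = (\<Sum>i<length us. trace (proj_onto (us ! i)))"
    unfolding Q_def by (rule trace_mat_sum) (use u in auto)
  moreover have "\<dots> = of_nat (length us)"
    using u nz by (simp add: trace_proj_onto[where d = d])
  ultimately show ?thesis
    using Pc by (simp add: Q_def trace_minus[of _ d])
qed

lemma (in vec_space) idempotent_fixes_col_space:
  assumes P: "P \<in> carrier_mat n n" and idem: "P * P = P" and u: "u \<in> col_space P"
  shows "P *\<^sub>v u = u"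
proof -
  obtain x where x: "x \<in> carrier_vec n" and u_eq: "u = P *\<^sub>v x"
    using u col_space_eq[OF P] P by auto
  have "P *\<^sub>v u = (P * P) *\<^sub>v x"
    using P x u_eq by simp
  then show ?thesis
    using idem u_eq by simp
qed

lemma rank_le_trace:
  assumes P: "orth_projector d P"
  shows "real (vec_space.rank d P) \<le> Re (trace P)"
proof -
  interpret cof_vec_space d "TYPE(complex)" .
  have Pc: "P \<in> carrier_mat d d" and idem: "P * P = P"
    using P by (simp_all add: orth_projector_def)
  obtain S where max: "maximal S (\<lambda>T. T \<subseteq> set (cols P) \<and> lin_indpt T)"
    using maximal_exists[of "\<lambda>T. T \<subseteq> set (cols P) \<and> lin_indpt T" "card (set (cols P))" "{}"]
    by (meson List.finite_set card_mono empty_iff empty_subsetI finite_lin_indpt2 rev_finite_subset)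
  have SP: "S \<subseteq> set (cols P)" and indpt: "lin_indpt S"
    using max unfolding maximal_def by auto
  obtain ws where ws: "set ws = S" "distinct ws"
    using finite_distinct_list[OF finite_subset[OF SP List.finite_set]] by blast
  have ws_carrier: "set ws \<subseteq> carrier_vec d"
    using ws SP Pc cols_dim by blast
  define us where "us = gram_schmidt d ws"
  note gs = gram_schmidt_result[OF ws_carrier ws(2) _ us_def]
  have "real (length us) \<le> Re (trace P)"
  proof (rule length_corthogonal_fixed_le_trace[OF P])
    show "set us \<subseteq> carrier_vec d" "corthogonal us"
      using gs indpt ws by auto
    fix u
    assume "u \<in> set us"
    then have "u \<in> span (set ws)"
      using gs indpt ws in_own_span[of "set us"] by auto
    also have "\<dots> \<subseteq> col_space P"
      unfolding col_space_def using ws SP by (intro span_is_monotone) auto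
    finally show "P *\<^sub>v u = u"
      by (rule idempotent_fixes_col_space[OF Pc idem])
  qed
  moreover have "length us = rank P"
    using gs indpt ws rank_card_indpt[OF Pc max] distinct_card[OF ws(2)] by auto
  ultimately show ?thesis
    by simp
qed

lemma proj_onto_unit_vec:
  assumes "i < n"
  shows "proj_onto (unit_vec n i) = mat n n (\<lambda>(a, b). if a = i \<and> b = i then 1 else 0)"
  using assms by (intro eq_matI) (auto simp: proj_onto_index[of _ n] cscalar_prod_sum)

lemma rank_proj_onto_unit_vec:
  assumes i: "i < n"
  shows "vec_space.rank n (proj_onto (unit_vec n i)) = 1"
proof -
  interpret vec_space "TYPE(complex)" n .
  define A where "A = proj_onto (unit_vec n i)"
  have A: "A \<in> carrier_mat n n"
    and A_index: "\<And>a b. a < n \<Longrightarrow> b < n \<Longrightarrow> A $$ (a, b) = (if a = i \<and> b = i then 1 else 0)"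
    unfolding A_def proj_onto_unit_vec[OF i] by auto
  have "rank A \<le> 1"
    using A A_index by (intro rank_le_1_product_entries[OF A,
          where f = "\<lambda>a. if a = i then 1 else 0" and g = "\<lambda>b. if b = i then 1 else 0"]) auto
  moreover have "1 \<le> rank A"
  proof -
    have rows: "{j. j < n \<and> j \<in> {i}} = {i}"
      using i by auto
    have minor: "submatrix A {i} {i} \<in> carrier_mat 1 1"
      unfolding submatrix_def using A rows by simp
    have "pick {i} 0 = i"
      by (auto intro!: Least_equality)
    then have "submatrix A {i} {i} $$ (0, 0) = 1"
      unfolding submatrix_def using A rows i by (simp add: A_index)
    then have "det (submatrix A {i} {i}) \<noteq> 0"
      using det_single[OF minor] by simp
    from rank_gt_minor[OF A this] show ?thesis
      unfolding rows by simp
  qed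
  ultimately show ?thesis
    unfolding A_def by simp
qed

section \<open>Graphs with independence number two\<close>

lemma finite_independent_set_cards:
  assumes "simple_graph V E"
  shows "finite {card S | S. independent_set V E S}"
proof (rule finite_subset)
  show "{card S | S. independent_set V E S} \<subseteq> {..card V}"
    using assms unfolding simple_graph_def independent_set_def by (auto intro: card_mono)
qed simp

lemma card_le_independence_number:
  assumes "simple_graph V E" and "independent_set V E S"
  shows "card S \<le> independence_number V E"
  unfolding independence_number_def using assms finite_independent_set_cards by (auto intro: Max_ge)

lemma independence_number_attained:
  assumes "simple_graph V E"
  obtains S where "independent_set V E S" and "card S = independence_number V E"
proof -
  have "independent_set V E {}"
    unfolding independent_set_def by simp
  then have "independence_number V E \<in> {card S | S. independent_set V E S}"
    unfolding independence_number_def using finite_independent_set_cards[OF assms]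
    by (intro Max_in) auto
  then show ?thesis
    using that by auto
qed

lemma independence_number_le_2_nonneighbours_adjacent:
  assumes G: "simple_graph V E" and alpha: "independence_number V E \<le> 2"
    and "u \<in> V" "v \<in> V" "w \<in> V" "v \<noteq> u" "w \<noteq> u" "v \<noteq> w" "\<not> E u v" "\<not> E u w"
  shows "E v w"
proof (rule ccontr)
  assume "\<not> E v w"
  then have "independent_set V E {u, v, w}"
    using assms unfolding simple_graph_def independent_set_def by blast
  then have "card {u, v, w} \<le> 2"
    using card_le_independence_number[OF G] alpha by (meson order_trans)
  then show False
    using assms by auto
qed

lemma trace_mult_mat_sum_nonneighbours_le:
  fixes P :: "'v \<Rightarrow> complex mat"
  assumes fin: "finite V" and P: "\<And>v. v \<in> V \<Longrightarrow> orth_projector d (P v)"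
    and orth: "\<And>v w. v \<in> V \<Longrightarrow> w \<in> V \<Longrightarrow> E v w \<Longrightarrow> P v * P w = 0\<^sub>m d d"
    and clique: "\<And>v w. v \<in> V \<Longrightarrow> w \<in> V \<Longrightarrow> v \<noteq> u \<Longrightarrow> w \<noteq> u \<Longrightarrow> v \<noteq> w \<Longrightarrow>
      \<not> E u v \<Longrightarrow> \<not> E u w \<Longrightarrow> E v w"
    and u: "u \<in> V"
  shows "Re (trace (P u * mat_sum d V P)) \<le> 2 * Re (trace (P u))"
proof -
  define C where "C = {v \<in> V - {u}. \<not> E u v}"
  have Pc: "\<And>v. v \<in> V \<Longrightarrow> P v \<in> carrier_mat d d"
    using P by (simp add: orth_projector_carrier)
  have "P u * P u = P u"
    using P[OF u] by (simp add: orth_projector_def)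
  then have "trace (P u * mat_sum d V P) = trace (P u) + (\<Sum>v\<in>V - {u}. trace (P u * P v))"
    using fin u Pc by (simp add: trace_mult_mat_sum sum.remove)
  also have "(\<Sum>v\<in>V - {u}. trace (P u * P v)) = (\<Sum>v\<in>C. trace (P u * P v))"
    unfolding C_def using fin u orth Pc[OF u]
    by (intro sum.mono_neutral_right) (auto simp: trace_def)
  also have "\<dots> = trace (P u * mat_sum d C P)"
    using u Pc by (intro trace_mult_mat_sum[symmetric]) (auto simp: C_def)
  finally have "trace (P u * mat_sum d V P) = trace (P u) + trace (P u * mat_sum d C P)" .
  moreover have "orth_projector d (mat_sum d C P)"
    unfolding C_def using fin P orth clique by (intro orth_projector_mat_sum) auto
  ultimately show ?thesis
    using trace_mult_orth_projector_le[OF P[OF u]] by simp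
qed

lemma trace_square_mat_sum_le:
  fixes P :: "'v \<Rightarrow> complex mat"
  assumes fin: "finite V" and P: "\<And>v. v \<in> V \<Longrightarrow> orth_projector d (P v)"
    and orth: "\<And>v w. v \<in> V \<Longrightarrow> w \<in> V \<Longrightarrow> E v w \<Longrightarrow> P v * P w = 0\<^sub>m d d"
    and clique: "\<And>u v w. u \<in> V \<Longrightarrow> v \<in> V \<Longrightarrow> w \<in> V \<Longrightarrow> v \<noteq> u \<Longrightarrow> w \<noteq> u \<Longrightarrow> v \<noteq> w \<Longrightarrow>
      \<not> E u v \<Longrightarrow> \<not> E u w \<Longrightarrow> E v w"
  shows "Re (trace (mat_sum d V P * mat_sum d V P)) \<le> 2 * (\<Sum>v\<in>V. Re (trace (P v)))"
proof -
  define S where "S = mat_sum d V P"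
  have Pc: "\<And>v. v \<in> V \<Longrightarrow> P v \<in> carrier_mat d d"
    using P by (simp add: orth_projector_carrier)
  have "S * S = mat_sum d V (\<lambda>u. P u * S)"
    unfolding S_def by (rule mult_mat_sum_left) (use Pc in auto)
  moreover have "trace (mat_sum d V (\<lambda>u. P u * S)) = (\<Sum>u\<in>V. trace (P u * S))"
    by (rule trace_mat_sum) (use Pc in \<open>auto simp: S_def intro!: mult_carrier_mat\<close>)
  ultimately have "Re (trace (S * S)) = (\<Sum>u\<in>V. Re (trace (P u * S)))"
    by (simp add: Re_sum)
  also have "\<dots> \<le> (\<Sum>u\<in>V. 2 * Re (trace (P u)))"
    unfolding S_def using fin P orth clique
    by (intro sum_mono trace_mult_mat_sum_nonneighbours_le[where E = E]) auto
  finally show ?thesis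
    by (simp add: S_def sum_distrib_left)
qed

lemma sum_trace_le_twice_dim:
  fixes P :: "'v \<Rightarrow> complex mat"
  assumes fin: "finite V" and P: "\<And>v. v \<in> V \<Longrightarrow> orth_projector d (P v)"
    and orth: "\<And>v w. v \<in> V \<Longrightarrow> w \<in> V \<Longrightarrow> E v w \<Longrightarrow> P v * P w = 0\<^sub>m d d"
    and clique: "\<And>u v w. u \<in> V \<Longrightarrow> v \<in> V \<Longrightarrow> w \<in> V \<Longrightarrow> v \<noteq> u \<Longrightarrow> w \<noteq> u \<Longrightarrow> v \<noteq> w \<Longrightarrow>
      \<not> E u v \<Longrightarrow> \<not> E u w \<Longrightarrow> E v w"
  shows "(\<Sum>v\<in>V. Re (trace (P v))) \<le> 2 * real d"
proof -
  define S where "S = mat_sum d V P"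
  define X where "X = (\<Sum>v\<in>V. Re (trace (P v)))"
  have "Re (trace S) = X"
    unfolding S_def X_def using P by (simp add: trace_mat_sum orth_projector_carrier Re_sum)
  then have "X\<^sup>2 \<le> real d * Re (trace (S * S))"
    using hermitian_trace_squared_le[of S d] mat_adjoint_mat_sum_orth_projector[OF fin P]
    by (simp add: S_def)
  also have "\<dots> \<le> real d * (2 * X)"
    using trace_square_mat_sum_le[OF fin P orth clique] by (simp add: S_def X_def mult_left_mono)
  finally have "X\<^sup>2 \<le> real d * (2 * X)" .
  moreover have "0 \<le> X"
    unfolding X_def using P by (intro sum_nonneg trace_orth_projector_nonneg) auto
  ultimately show ?thesis
    unfolding X_def[symmetric] by (cases "X = 0") (auto simp: power2_eq_square)
qed

lemma ex_dr_representation_card_one: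
  assumes G: "simple_graph V E"
  shows "\<exists>P. dr_representation V E (card V) 1 P"
proof -
  define n where "n = card V"
  obtain h where h: "bij_betw h V {..<n}"
    using G ex_bij_betw_finite_nat[of V] unfolding simple_graph_def n_def atLeast0LessThan by blast
  define P where "P v = proj_onto (unit_vec n (h v))" for v
  have hV: "h v < n" if "v \<in> V" for v
    using bij_betw_apply[OF h that] by simp
  have "dr_representation V E n 1 P"
    unfolding dr_representation_def
  proof (intro conjI ballI allI impI)
    fix v
    assume "v \<in> V"
    then have "h v < n"
      by (rule hV)
    then show "orth_projector n (P v)"
      unfolding P_def by (intro orth_projector_proj_onto) auto
    show "vec_space.rank n (P v) = 1"
      unfolding P_def by (rule rank_proj_onto_unit_vec) fact
  next
    fix v w
    assume "E v w"
    then have "v \<in> V" "w \<in> V" "v \<noteq> w"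
      using G unfolding simple_graph_def by auto
    then have "h v \<noteq> h w"
      using h unfolding bij_betw_def inj_on_def by blast
    then show "P v * P w = 0\<^sub>m n n"
      unfolding P_def using hV \<open>v \<in> V\<close> \<open>w \<in> V\<close> by (intro proj_onto_mult_orthogonal) auto
  qed
  then show ?thesis
    unfolding n_def by blast
qed

lemma dr_representation_ratio_ge:
  assumes G: "simple_graph V E" and alpha: "independence_number V E \<le> 2"
    and rep: "dr_representation V E d r P" and r: "0 < r"
  shows "real (card V) / 2 \<le> real d / real r"
proof -
  have P: "\<And>v. v \<in> V \<Longrightarrow> orth_projector d (P v)"
    and rank: "\<And>v. v \<in> V \<Longrightarrow> vec_space.rank d (P v) = r"
    and orth: "\<And>v w. E v w \<Longrightarrow> P v * P w = 0\<^sub>m d d"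
    using rep unfolding dr_representation_def by auto
  have "real (card V) * real r = (\<Sum>v\<in>V. real (vec_space.rank d (P v)))"
    using rank by simp
  also have "\<dots> \<le> (\<Sum>v\<in>V. Re (trace (P v)))"
    using P by (intro sum_mono rank_le_trace) auto
  also have "\<dots> \<le> 2 * real d"
  proof (rule sum_trace_le_twice_dim[where E = E])
    show "finite V"
      using G by (simp add: simple_graph_def)
    show "\<And>v w. v \<in> V \<Longrightarrow> w \<in> V \<Longrightarrow> E v w \<Longrightarrow> P v * P w = 0\<^sub>m d d"
      by (rule orth)
  qed (use P independence_number_le_2_nonneighbours_adjacent[OF G alpha] in blast)+
  finally show ?thesis
    using r by (simp add: field_simps)
qed

theorem proposition1p6:
  fixes V :: "'a set" and E :: "'a \<Rightarrow> 'a \<Rightarrow> bool" and n :: nat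
  assumes "simple_graph V E"
    and "card V = n"
    and "independence_number V E = 2"
  shows "projective_rank V E \<ge> real n / 2"
proof -
  define R where
    "R = {real d / real r | d r. d > 0 \<and> r > 0 \<and> (\<exists>P. dr_representation V E d r P)}"
  obtain S where "independent_set V E S" "card S = 2"
    using independence_number_attained[OF assms(1)] assms(3) by metis
  then have "0 < n"
    using assms(1,2) unfolding simple_graph_def independent_set_def
    by (metis card_mono not_gr0 zero_less_numeral le_zero_eq)
  then have "real n / real (1::nat) \<in> R"
    unfolding R_def using ex_dr_representation_card_one[OF assms(1)] assms(2) by blast
  moreover have "real n / 2 \<le> x" if "x \<in> R" for x
    using that dr_representation_ratio_ge[OF assms(1)] assms(2,3) unfolding R_def by auto
  ultimately have "real n / 2 \<le> Inf R"
    by (intro cInf_greatest) auto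
  then show ?thesis
    unfolding projective_rank_def R_def .
qed

end
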